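(* Let $x\in V(T)$, let $s$ be a worst-case scenario of $T$ with respect to $x$, and let $y\in V(T)\setminus\{x\}$ be a prime broadcast center of $T$ under $s$ such that $w^{s}_{a,b}=w^{\alpha_{x,y}}_{a,b}$ for every $(a,b)\in P_{x,y}\cup E(T_{y,x})$. Let $\mu$ be the neighbour of $y$ on the $y$–$x$ path. Suppose $y$ has $h\ge1$ neighbours $u_1,\dots,u_h$ in $\bar T_{y,x}$, and let $a_1\ge a_2\ge\dots\ge a_h$ be the values $w^s_{y,u_k}+b^s(u_k,\bar T_{u_k,y})$, $1\le k\le h$, sorted in nonincreasing order. Let $\tau_0$ be the smallest index $k\in\{1,\dots,h\}$ maximizing $k\rho+a_k$. If $$w^s_{y,\mu}+b^s(\mu,T_{y,x})\ge a_{\tau_0},$$ then $\alpha_{x,y}$ is a worst-case scenario of $T$ with respect to $x$.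
   Context: $T$ is a finite tree; each edge $(u,v)$ carries an interval $[w^-_{u,v},w^+_{u,v}]$ of non-negative reals. A scenario $s$ assigns to every edge a weight $w^s_{u,v}\in[w^-_{u,v},w^+_{u,v}]$; $C$ is the set of all scenarios. A constant $\rho>0$ is fixed. Broadcast time (postal model): for a subtree $G$ of $T$ and $u\in V(G)$, $b^s(u,G)=0$ if $u$ has no neighbour in $G$; otherwise, if $v_1,\dots,v_h$ are the neighbours of $u$ in $G$ and $G_{v}$ is the component of $G-u$ containing $v$, $b^s(u,G)=\min_{\pi}\max_{1\le k\le h}\big(k\rho+w^s_{u,v_{\pi(k)}}+b^s(v_{\pi(k)},G_{v_{\pi(k)}})\big)$ over permutations $\pi$. $B^s=\{u: b^s(u,T)\le b^s(v,T)\ \forall v\}$. For distinct $x,y$, $T_{x,y}$ is the component of $T-x$ containing $y$ and $\bar T_{x,y}$ the subtree induced by $V(T)\setminus V(T_{x,y})$. $P_{x,y}$ is the set of edges of the $x$–$y$ path. A vertex $\hat\kappa\in B^s$ is a prime broadcast center under $s$ if $b^s(\hat\kappa,\bar T_{\hat\kappa,u})\ge b^s(u,\bar T_{u,\hat\kappa})$ for every neighbour $u$ of $\hat\kappa$. Regret $r^s_{x,y}=b^s(x,T)-b^s(y,T)$; $\mathrm{max\_r}(x)=\max\{r^s_{x,y}:y\in V(T),s\in C\}$; $s'$ is a worst-case scenario w.r.t. $x$ if $\mathrm{max\_r}(x)=r^{s'}_{x,y'}$ for some $y'$. Base scenario: for $v\neq x$, $\alpha_{x,v}$ has $w^{\alpha_{x,v}}_{a,b}=w^+_{a,b}$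 if $(a,b)\in P_{x,v}\cup E(\bar T_{v,x})$ and $w^-_{a,b}$ otherwise. *)

theory Defs
  imports Main "HOL-Combinatorics.Multiset_Permutations"
begin

(* Vertices have type 'a; the tree T is given by a vertex set V and a set E of
   undirected edges, each edge being a two-element set {a,b}.
   Edge weights / scenarios are functions 'a set => real (only values on E matter).
   A subtree G of T is represented by its vertex set S (subtrees of a tree are
   induced subgraphs). *)

definition adjrel :: "'a set set \<Rightarrow> 'a set \<Rightarrow> ('a \<times> 'a) set" where
  "adjrel E S = {(p,q). p \<in> S \<and> q \<in> S \<and> {p,q} \<in> E}"

definition comp :: "'a set set \<Rightarrow> 'a set \<Rightarrow> 'a \<Rightarrow> 'a \<Rightarrow> 'a set" where
  "comp E S u v = {z. (v,z) \<in> (adjrel E (S - {u}))\<^sup>*}"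

definition nbrs :: "'a set set \<Rightarrow> 'a set \<Rightarrow> 'a \<Rightarrow> 'a set" where
  "nbrs E S u = {v \<in> S. {u,v} \<in> E}"

(* broadcast time with a fuel argument n; the recursion is on the components
   G_v, whose vertex sets are strictly smaller, so fuel card S suffices.
   Permutations of the neighbours are represented by distinct lists
   enumerating them; position k (1-based) is xs!(k-1). *)
primrec bc :: "'a set set \<Rightarrow> real \<Rightarrow> ('a set \<Rightarrow> real) \<Rightarrow> nat \<Rightarrow> 'a set \<Rightarrow> 'a \<Rightarrow> real" where
  "bc E \<rho> s 0 S u = 0"
| "bc E \<rho> s (Suc n) S u =
     (if nbrs E S u = {} then 0
      else Min ((\<lambda>xs. Max ((\<lambda>k. real k * \<rho> + s {u, xs!(k-1)}
                                   + bc E \<rho> s n (comp E S u (xs!(k-1))) (xs!(k-1)))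
                          ` {1..length xs}))
                ` permutations_of_set (nbrs E S u)))"

definition bcast :: "'a set set \<Rightarrow> real \<Rightarrow> ('a set \<Rightarrow> real) \<Rightarrow> 'a set \<Rightarrow> 'a \<Rightarrow> real" where
  "bcast E \<rho> s S u = bc E \<rho> s (card S) S u"

(* finite tree: nonempty finite vertex set, edges are 2-sets of vertices,
   connected, and acyclic (every edge is a bridge, i.e. lies on no cycle) *)
definition is_tree :: "'a set \<Rightarrow> 'a set set \<Rightarrow> bool" where
  "is_tree V E \<longleftrightarrow> finite V \<and> V \<noteq> {}
     \<and> (\<forall>e\<in>E. \<exists>a b. a \<in> V \<and> b \<in> V \<and> a \<noteq> b \<and> e = {a,b})
     \<and> (\<forall>a\<in>V. \<forall>b\<in>V. (a,b) \<in> (adjrel E V)\<^sup>*)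
     \<and> (\<forall>e\<in>E. \<forall>a b. e = {a,b} \<longrightarrow> (a,b) \<notin> (adjrel (E - {e}) V)\<^sup>*)"

definition Tsub :: "'a set set \<Rightarrow> 'a set \<Rightarrow> 'a \<Rightarrow> 'a \<Rightarrow> 'a set" where
  "Tsub E V x y = comp E V x y"

definition Tbar :: "'a set set \<Rightarrow> 'a set \<Rightarrow> 'a \<Rightarrow> 'a \<Rightarrow> 'a set" where
  "Tbar E V x y = V - Tsub E V x y"

definition edges_of :: "'a set set \<Rightarrow> 'a set \<Rightarrow> 'a set set" where
  "edges_of E S = {e \<in> E. e \<subseteq> S}"

definition is_path :: "'a set set \<Rightarrow> 'a list \<Rightarrow> 'a \<Rightarrow> 'a \<Rightarrow> bool" where
  "is_path E p x y \<longleftrightarrow> p \<noteq> [] \<and> hd p = x \<and> last p = y \<and> distinct p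
     \<and> (\<forall>i. Suc i < length p \<longrightarrow> {p!i, p!Suc i} \<in> E)"

definition path_edges :: "'a set set \<Rightarrow> 'a \<Rightarrow> 'a \<Rightarrow> 'a set set" where
  "path_edges E x y = {{p!i, p!Suc i} | p i. is_path E p x y \<and> Suc i < length p}"

definition scenario :: "'a set set \<Rightarrow> ('a set \<Rightarrow> real) \<Rightarrow> ('a set \<Rightarrow> real) \<Rightarrow> ('a set \<Rightarrow> real) \<Rightarrow> bool" where
  "scenario E wl wu s \<longleftrightarrow> (\<forall>e\<in>E. wl e \<le> s e \<and> s e \<le> wu e)"

definition regret :: "'a set set \<Rightarrow> real \<Rightarrow> 'a set \<Rightarrow> ('a set \<Rightarrow> real) \<Rightarrow> 'a \<Rightarrow> 'a \<Rightarrow> real" where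
  "regret E \<rho> V s x y = bcast E \<rho> s V x - bcast E \<rho> s V y"

definition max_r :: "'a set set \<Rightarrow> real \<Rightarrow> 'a set \<Rightarrow> ('a set \<Rightarrow> real) \<Rightarrow> ('a set \<Rightarrow> real) \<Rightarrow> 'a \<Rightarrow> real" where
  "max_r E \<rho> V wl wu x = Sup {regret E \<rho> V s x y | s y. y \<in> V \<and> scenario E wl wu s}"

definition worst_case :: "'a set set \<Rightarrow> real \<Rightarrow> 'a set \<Rightarrow> ('a set \<Rightarrow> real) \<Rightarrow> ('a set \<Rightarrow> real) \<Rightarrow> ('a set \<Rightarrow> real) \<Rightarrow> 'a \<Rightarrow> bool" where
  "worst_case E \<rho> V wl wu s x \<longleftrightarrow> scenario E wl wu s
     \<and> (\<exists>y\<in>V. max_r E \<rho> V wl wu x = regret E \<rho> V s x y)"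

definition alpha :: "'a set set \<Rightarrow> 'a set \<Rightarrow> ('a set \<Rightarrow> real) \<Rightarrow> ('a set \<Rightarrow> real) \<Rightarrow> 'a \<Rightarrow> 'a \<Rightarrow> 'a set \<Rightarrow> real" where
  "alpha E V wl wu x v = (\<lambda>e. if e \<in> path_edges E x v \<union> edges_of E (Tbar E V v x) then wu e else wl e)"

definition in_B :: "'a set set \<Rightarrow> real \<Rightarrow> 'a set \<Rightarrow> ('a set \<Rightarrow> real) \<Rightarrow> 'a \<Rightarrow> bool" where
  "in_B E \<rho> V s k \<longleftrightarrow> k \<in> V \<and> (\<forall>v\<in>V. bcast E \<rho> s V k \<le> bcast E \<rho> s V v)"

definition prime_bc :: "'a set set \<Rightarrow> real \<Rightarrow> 'a set \<Rightarrow> ('a set \<Rightarrow> real) \<Rightarrow> 'a \<Rightarrow> bool" where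
  "prime_bc E \<rho> V s k \<longleftrightarrow> in_B E \<rho> V s k
     \<and> (\<forall>u\<in>nbrs E V k. bcast E \<rho> s (Tbar E V k u) k \<ge> bcast E \<rho> s (Tbar E V u k) u)"

end

theory Submission
  imports Defs
begin

(* Let T_x be the side of the edge {y, mu} that contains x and T_y the other side, and let
   c = w_{y,mu} + b(mu, T_x) be the time y needs for its branch towards x.  Under s, y has to
   serve mu and the tau0 largest branches of T_y, each needing at least a_tau0, so
   b^s(y, T) >= rho + max(c, b^s(y, T_y)); under alpha, which agrees with s on T_x and on the
   path, calling mu first gives b^alpha(y, T) <= rho + max(c, b^alpha(y, T_y)).  Walking from y
   to x, the alpha-time of the part of T behind the current vertex grows at least as fast as
   the s-time of the whole tree, so b^alpha(x, T) - b^s(x, T) >= b^alpha(y, T_y) - max(c, b^s(y, T_y)).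
   Together, alpha raises b(x, T) at least as much as b(y, T), and since y is a broadcast centre
   under s the regret of x against y under alpha is at least max_r(x). *)

text \<open>\<open>postal_time \<rho> f vs\<close> is the completion time when the vertices \<open>vs\<close> are called in this
  order and \<open>v\<close> needs time \<open>f v\<close> after its call; for nonnegative \<open>f\<close> it is the maximum over
  call positions taken in \<^const>\<open>bc\<close> (lemma \<open>Max_eq_postal_time\<close>).\<close>

fun postal_time :: "real \<Rightarrow> ('a \<Rightarrow> real) \<Rightarrow> 'a list \<Rightarrow> real" where
  "postal_time \<rho> f [] = 0"
| "postal_time \<rho> f (v # vs) = \<rho> + max (f v) (postal_time \<rho> f vs)"

lemma postal_time_ge_nth:
  assumes "k \<in> {1..length vs}"
  shows "real k * \<rho> + f (vs ! (k - 1)) \<le> postal_time \<rho> f vs"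
  using assms
proof (induction vs arbitrary: k)
  case Nil
  then show ?case by simp
next
  case (Cons v vs)
  show ?case
  proof (cases k)
    case (Suc k')
    show ?thesis
    proof (cases k')
      case (Suc k'')
      then have "real k' * \<rho> + f (vs ! (k' - 1)) \<le> postal_time \<rho> f vs"
        using Cons \<open>k = Suc k'\<close> by (intro Cons.IH) auto
      then show ?thesis using \<open>k = Suc k'\<close> Suc by (simp add: algebra_simps)
    qed (use \<open>k = Suc k'\<close> in simp)
  qed (use Cons.prems in simp)
qed

lemma postal_time_attained:
  assumes "vs \<noteq> []" "\<forall>z\<in>set vs. 0 \<le> f z"
  shows "\<exists>k\<in>{1..length vs}. postal_time \<rho> f vs \<le> real k * \<rho> + f (vs ! (k - 1))"
  using assms
proof (induction vs)
  case Nil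
  then show ?case by simp
next
  case (Cons v vs)
  show ?case
  proof (cases "postal_time \<rho> f vs \<le> f v")
    case True
    then show ?thesis by (intro bexI[of _ 1]) auto
  next
    case False
    then have "vs \<noteq> []" using Cons.prems by auto
    then obtain k where "k \<in> {1..length vs}" "postal_time \<rho> f vs \<le> real k * \<rho> + f (vs ! (k - 1))"
      using Cons by auto
    then show ?thesis using False by (intro bexI[of _ "Suc k"]) (auto simp: algebra_simps)
  qed
qed

lemma Max_eq_postal_time:
  assumes "vs \<noteq> []" "\<forall>z\<in>set vs. 0 \<le> f z"
  shows "Max ((\<lambda>k. real k * \<rho> + f (vs ! (k - 1))) ` {1..length vs}) = postal_time \<rho> f vs"
proof (rule antisym)
  have "{1..length vs} \<noteq> {}" using assms(1) by (simp add: Suc_le_eq)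
  then show "Max ((\<lambda>k. real k * \<rho> + f (vs ! (k - 1))) ` {1..length vs}) \<le> postal_time \<rho> f vs"
    using postal_time_ge_nth by (subst Max_le_iff) blast+
  obtain k where "k \<in> {1..length vs}" "postal_time \<rho> f vs \<le> real k * \<rho> + f (vs ! (k - 1))"
    using postal_time_attained[OF assms] by blast
  then show "postal_time \<rho> f vs \<le> Max ((\<lambda>k. real k * \<rho> + f (vs ! (k - 1))) ` {1..length vs})"
    by (meson Max_ge finite_atLeastAtMost finite_imageI image_eqI order_trans)
qed

lemma postal_time_mono:
  "\<forall>z\<in>set vs. f z \<le> g z \<Longrightarrow> postal_time \<rho> f vs \<le> postal_time \<rho> g vs"
  by (induction vs) (auto simp: max_def)

lemma postal_time_cong:
  "\<forall>z\<in>set vs. f z = g z \<Longrightarrow> postal_time \<rho> f vs = postal_time \<rho> g vs"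
  by (induction vs) auto

lemma postal_time_filter_le:
  "0 \<le> \<rho> \<Longrightarrow> postal_time \<rho> f (filter P vs) \<le> postal_time \<rho> f vs"
  by (induction vs) (auto simp: max_def)

lemma postal_time_ge_card:
  assumes "0 \<le> \<rho>" "W \<subseteq> set vs" "finite W" "card W = Suc m" "\<forall>w\<in>W. t \<le> f w"
  shows "real (Suc m) * \<rho> + t \<le> postal_time \<rho> f vs"
  using assms
proof (induction vs arbitrary: W m)
  case Nil
  then show ?case by auto
next
  case (Cons v vs)
  show ?case
  proof (cases "v \<in> W")
    case False
    then have "real (Suc m) * \<rho> + t \<le> postal_time \<rho> f vs"
      using Cons by (intro Cons.IH) auto
    then show ?thesis using Cons.prems by (simp add: max_def)
  next
    case True
    show ?thesis
    proof (cases m)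
      case 0
      have "t \<le> f v" using True Cons.prems by blast
      then show ?thesis using 0 by (simp add: max_def)
    next
      case (Suc m')
      have "real (Suc m') * \<rho> + t \<le> postal_time \<rho> f vs"
        using Cons.prems True Suc by (intro Cons.IH[of "W - {v}"]) auto
      then show ?thesis using Suc by (simp add: max_def algebra_simps)
    qed
  qed
qed

lemma sym_adjrel: "sym (adjrel E S)"
  by (auto simp: adjrel_def insert_commute intro: symI)

lemma comp_subset: "comp E S u v \<subseteq> insert v (S - {u})"
proof
  fix z assume "z \<in> comp E S u v"
  then have "(v, z) \<in> (adjrel E (S - {u}))\<^sup>*" by (simp add: Defs.comp_def)
  then show "z \<in> insert v (S - {u})"
    by (induction rule: rtrancl_induct) (auto simp: adjrel_def)
qed

lemma comp_self: "v \<in> comp E S u v"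
  by (simp add: Defs.comp_def)

lemma comp_subset_of_mem: "v \<in> S \<Longrightarrow> comp E S u v \<subseteq> S"
  using comp_subset by fastforce

lemma center_notin_comp: "u \<noteq> v \<Longrightarrow> u \<notin> comp E S u v"
  using comp_subset by fastforce

lemma finite_comp: "finite S \<Longrightarrow> finite (comp E S u v)"
  by (rule finite_subset[OF comp_subset]) simp

lemma card_comp_less: "finite S \<Longrightarrow> u \<in> S \<Longrightarrow> v \<in> S \<Longrightarrow> v \<noteq> u \<Longrightarrow> card (comp E S u v) < card S"
  using comp_subset[of E S u v] by (intro psubset_card_mono) auto

lemma comp_step: "z \<in> comp E S u v \<Longrightarrow> (z, z') \<in> adjrel E (S - {u}) \<Longrightarrow> z' \<in> comp E S u v"
  unfolding Defs.comp_def by (simp add: rtrancl_into_rtrancl)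

lemma comp_eq_of_mem:
  assumes "z \<in> comp E S u v"
  shows "comp E S u z = comp E S u v"
proof -
  have "(v, z) \<in> (adjrel E (S - {u}))\<^sup>*" using assms by (simp add: Defs.comp_def)
  moreover from this have "(z, v) \<in> (adjrel E (S - {u}))\<^sup>*"
    by (rule symD[OF sym_rtrancl[OF sym_adjrel]])
  ultimately show ?thesis unfolding Defs.comp_def by (blast intro: rtrancl_trans)
qed

lemma comp_restrict:
  assumes "S' \<subseteq> S" "comp E S u v \<subseteq> S'"
  shows "comp E S' u v = comp E S u v"
proof
  have "adjrel E (S' - {u}) \<subseteq> adjrel E (S - {u})"
    using assms(1) by (auto simp: adjrel_def)
  then show "comp E S' u v \<subseteq> comp E S u v"
    unfolding Defs.comp_def by (blast dest: rtrancl_mono)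
  show "comp E S u v \<subseteq> comp E S' u v"
  proof
    fix z assume "z \<in> comp E S u v"
    then have "(v, z) \<in> (adjrel E (S - {u}))\<^sup>*" by (simp add: Defs.comp_def)
    then have "(v, z) \<in> (adjrel E (S' - {u}))\<^sup>*"
    proof (induction rule: rtrancl_induct)
      case (step y z)
      then have "y \<in> comp E S u v" "z \<in> comp E S u v"
        using rtrancl_into_rtrancl[OF step(1,2)] by (simp_all add: Defs.comp_def)
      then have "(y, z) \<in> adjrel E (S' - {u})"
        using assms(2) step(2) by (auto simp: adjrel_def)
      then show ?case using step(3) by (rule rtrancl_into_rtrancl[rotated])
    qed simp
    then show "z \<in> comp E S' u v" by (simp add: Defs.comp_def)
  qed
qed

lemma finite_nbrs: "finite S \<Longrightarrow> finite (nbrs E S u)"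
  by (simp add: nbrs_def)

lemma nth_mem_permutations_of_set:
  "vs \<in> permutations_of_set N \<Longrightarrow> k \<in> {1..length vs} \<Longrightarrow> vs ! (k - 1) \<in> N"
  unfolding permutations_of_set_def by auto

definition branch_time :: "'a set set \<Rightarrow> real \<Rightarrow> ('a set \<Rightarrow> real) \<Rightarrow> 'a set \<Rightarrow> 'a \<Rightarrow> 'a \<Rightarrow> real" where
  "branch_time E \<rho> s S u v = s {u, v} + bcast E \<rho> s (comp E S u v) v"

locale postal_model =
  fixes E :: "'a set set" and \<rho> :: real
  assumes no_loops: "{a} \<notin> E"
    and rho_nonneg: "0 \<le> \<rho>"
begin

lemma card_comp_nbr_less: "finite S \<Longrightarrow> u \<in> S \<Longrightarrow> v \<in> nbrs E S u \<Longrightarrow> card (comp E S u v) < card S"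
  using no_loops by (intro card_comp_less) (auto simp: nbrs_def)

lemma bc_nonneg:
  assumes "\<forall>e\<in>E. 0 \<le> s e" "finite S"
  shows "0 \<le> bc E \<rho> s n S u"
  using assms(2)
proof (induction n arbitrary: S u)
  case (Suc n)
  let ?N = "nbrs E S u"
  let ?h = "\<lambda>vs k. real k * \<rho> + s {u, vs ! (k - 1)} + bc E \<rho> s n (comp E S u (vs ! (k - 1))) (vs ! (k - 1))"
  have "0 \<le> Max (?h vs ` {1..length vs})" if vs: "vs \<in> permutations_of_set ?N" and "?N \<noteq> {}" for vs
  proof -
    have "1 \<in> {1..length vs}"
      using that by (auto simp: permutations_of_set_def Suc_le_eq)
    moreover have "0 \<le> ?h vs 1"
      using nth_mem_permutations_of_set[OF vs \<open>1 \<in> _\<close>] assms(1) rho_nonneg Suc.IH[OF finite_comp[OF Suc.prems]]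
      by (simp add: nbrs_def)
    ultimately show ?thesis
      by (meson Max_ge finite_atLeastAtMost finite_imageI imageI order_trans)
  qed
  then show ?case
    using finite_nbrs[OF Suc.prems] by (cases "?N = {}") (simp_all add: Min_ge_iff)
qed simp

lemma bc_fuel:
  assumes "finite S" "u \<in> S" "card S \<le> n" "card S \<le> m"
  shows "bc E \<rho> s n S u = bc E \<rho> s m S u"
  using assms
proof (induction n arbitrary: S u m)
  case 0
  then show ?case using card_gt_0_iff by fastforce
next
  case (Suc n)
  obtain m' where m: "m = Suc m'"
    using Suc.prems card_gt_0_iff by (cases m) fastforce+
  let ?h = "\<lambda>n vs k. real k * \<rho> + s {u, vs ! (k - 1)} + bc E \<rho> s n (comp E S u (vs ! (k - 1))) (vs ! (k - 1))"
  have "bc E \<rho> s n (comp E S u v) v = bc E \<rho> s m' (comp E S u v) v" if "v \<in> nbrs E S u" for v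
  proof (rule Suc.IH)
    have "card (comp E S u v) < card S"
      by (rule card_comp_nbr_less[OF Suc.prems(1,2) that])
    then show "card (comp E S u v) \<le> n" "card (comp E S u v) \<le> m'"
      using Suc.prems m by auto
  qed (auto simp: Suc.prems finite_comp comp_self)
  then have "?h n vs ` {1..length vs} = ?h m' vs ` {1..length vs}"
    if "vs \<in> permutations_of_set (nbrs E S u)" for vs
    using nth_mem_permutations_of_set[OF that] by (intro image_cong) auto
  then have "(\<lambda>vs. Max (?h n vs ` {1..length vs})) ` permutations_of_set (nbrs E S u)
      = (\<lambda>vs. Max (?h m' vs ` {1..length vs})) ` permutations_of_set (nbrs E S u)"
    by (intro image_cong refl) (simp only:)
  then show ?case
    unfolding m bc.simps by (simp only:)
qed

lemma bcast_nonneg: "\<forall>e\<in>E. 0 \<le> s e \<Longrightarrow> finite S \<Longrightarrow> 0 \<le> bcast E \<rho> s S u"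
  unfolding bcast_def by (rule bc_nonneg)

lemma branch_time_nonneg:
  "\<forall>e\<in>E. 0 \<le> s e \<Longrightarrow> finite S \<Longrightarrow> v \<in> nbrs E S u \<Longrightarrow> 0 \<le> branch_time E \<rho> s S u v"
  unfolding branch_time_def nbrs_def
  by (auto intro!: add_nonneg_nonneg bcast_nonneg finite_comp)

lemma bc_nbr_eq_bcast:
  assumes "finite S" "u \<in> S" "card S = Suc n" "v \<in> nbrs E S u"
  shows "bc E \<rho> s n (comp E S u v) v = bcast E \<rho> s (comp E S u v) v"
  unfolding bcast_def using card_comp_nbr_less[OF assms(1,2,4)] assms(1,3)
  by (intro bc_fuel) (auto simp: finite_comp comp_self)

lemma bcast_unfold:
  assumes "finite S" "u \<in> S" "\<forall>e\<in>E. 0 \<le> s e"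
  shows "bcast E \<rho> s S u = (if nbrs E S u = {} then 0
           else Min (postal_time \<rho> (branch_time E \<rho> s S u) ` permutations_of_set (nbrs E S u)))"
proof -
  obtain n where n: "card S = Suc n"
    using assms card_gt_0_iff by (cases "card S") fastforce+
  let ?h = "\<lambda>vs k. real k * \<rho> + s {u, vs ! (k - 1)} + bc E \<rho> s n (comp E S u (vs ! (k - 1))) (vs ! (k - 1))"
  have Max_eq: "Max (?h vs ` {1..length vs}) = postal_time \<rho> (branch_time E \<rho> s S u) vs"
    if vs: "vs \<in> permutations_of_set (nbrs E S u)" and "nbrs E S u \<noteq> {}" for vs
  proof -
    have "?h vs k = real k * \<rho> + branch_time E \<rho> s S u (vs ! (k - 1))"
      if "k \<in> {1..length vs}" for k
      using bc_nbr_eq_bcast[OF assms(1,2) n nth_mem_permutations_of_set[OF vs that]]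
      by (simp add: branch_time_def)
    then have "?h vs ` {1..length vs} = (\<lambda>k. real k * \<rho> + branch_time E \<rho> s S u (vs ! (k - 1))) ` {1..length vs}"
      by (rule image_cong[OF refl])
    also have "Max \<dots> = postal_time \<rho> (branch_time E \<rho> s S u) vs"
      using that branch_time_nonneg[OF assms(3,1)]
      by (intro Max_eq_postal_time) (auto simp: permutations_of_set_def)
    finally show ?thesis .
  qed
  show ?thesis
  proof (cases "nbrs E S u = {}")
    case False
    then have "(\<lambda>vs. Max (?h vs ` {1..length vs})) ` permutations_of_set (nbrs E S u)
        = postal_time \<rho> (branch_time E \<rho> s S u) ` permutations_of_set (nbrs E S u)"
      using Max_eq by (intro image_cong refl)
    then show ?thesis
      unfolding bcast_def n bc.simps by (simp only: if_False False)
  qed (simp add: bcast_def n)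
qed

lemma bcast_le_postal_time:
  assumes "finite S" "u \<in> S" "\<forall>e\<in>E. 0 \<le> s e"
    and "vs \<in> permutations_of_set (nbrs E S u)"
  shows "bcast E \<rho> s S u \<le> postal_time \<rho> (branch_time E \<rho> s S u) vs"
proof (cases "nbrs E S u = {}")
  case False
  then show ?thesis
    using assms by (simp add: bcast_unfold finite_nbrs)
qed (use assms in \<open>simp add: bcast_unfold\<close>)

lemma bcast_eq_postal_time:
  assumes "finite S" "u \<in> S" "\<forall>e\<in>E. 0 \<le> s e"
  obtains vs where "vs \<in> permutations_of_set (nbrs E S u)"
    "bcast E \<rho> s S u = postal_time \<rho> (branch_time E \<rho> s S u) vs"
proof (cases "nbrs E S u = {}")
  case True
  then show ?thesis using that[of "[]"] assms by (simp add: bcast_unfold)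
next
  case False
  have "Min (postal_time \<rho> (branch_time E \<rho> s S u) ` permutations_of_set (nbrs E S u))
      \<in> postal_time \<rho> (branch_time E \<rho> s S u) ` permutations_of_set (nbrs E S u)"
    using assms(1) by (intro Min_in) (simp_all add: finite_nbrs)
  then obtain vs where "vs \<in> permutations_of_set (nbrs E S u)"
    "Min (postal_time \<rho> (branch_time E \<rho> s S u) ` permutations_of_set (nbrs E S u))
       = postal_time \<rho> (branch_time E \<rho> s S u) vs"
    by blast
  moreover have "bcast E \<rho> s S u
      = Min (postal_time \<rho> (branch_time E \<rho> s S u) ` permutations_of_set (nbrs E S u))"
    using False assms by (simp add: bcast_unfold)
  ultimately show ?thesis using that by simp
qed

lemma bcast_ge_card:
  assumes "finite S" "u \<in> S" "\<forall>e\<in>E. 0 \<le> s e"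
    and "W \<subseteq> nbrs E S u" "card W = Suc m" "\<forall>w\<in>W. t \<le> branch_time E \<rho> s S u w"
  shows "real (Suc m) * \<rho> + t \<le> bcast E \<rho> s S u"
proof -
  obtain vs where vs: "vs \<in> permutations_of_set (nbrs E S u)"
    "bcast E \<rho> s S u = postal_time \<rho> (branch_time E \<rho> s S u) vs"
    using bcast_eq_postal_time[OF assms(1-3)] .
  have "W \<subseteq> set vs" using vs(1) assms(4) by (simp add: permutations_of_set_def)
  moreover have "finite W" by (rule finite_subset[OF assms(4) finite_nbrs[OF assms(1)]])
  ultimately show ?thesis
    using postal_time_ge_card[OF rho_nonneg _ _ assms(5,6)] vs(2) by simp
qed

lemma bcast_ge_branch_time:
  assumes "finite S" "u \<in> S" "\<forall>e\<in>E. 0 \<le> s e" "v \<in> nbrs E S u"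
  shows "\<rho> + branch_time E \<rho> s S u v \<le> bcast E \<rho> s S u"
  using bcast_ge_card[OF assms(1-3), of "{v}" 0] assms(4) by simp

lemma bcast_le_of_enumeration:
  assumes "finite S" "v \<in> S" "\<forall>e\<in>E. 0 \<le> s e"
    and "bij_betw u {1..h} (nbrs E S v)" "1 \<le> h"
    and "\<forall>k\<in>{1..h}. real k * \<rho> + branch_time E \<rho> s S v (u k) \<le> t"
  shows "bcast E \<rho> s S v \<le> t"
proof -
  define vs where "vs = map u [1..<Suc h]"
  let ?f = "branch_time E \<rho> s S v"
  have len: "length vs = h" and nth: "\<And>k. k \<in> {1..h} \<Longrightarrow> vs ! (k - 1) = u k"
    by (auto simp: vs_def nth_map simp del: upt_Suc)
  have vs_perm: "vs \<in> permutations_of_set (nbrs E S v)"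
    using assms(4) by (auto simp: vs_def permutations_of_set_def bij_betw_def distinct_map
        atLeastLessThanSuc_atLeastAtMost simp del: upt_Suc)
  have "bcast E \<rho> s S v \<le> postal_time \<rho> ?f vs"
    by (rule bcast_le_postal_time[OF assms(1-3) vs_perm])
  also have "\<dots> = Max ((\<lambda>k. real k * \<rho> + ?f (vs ! (k - 1))) ` {1..h})"
    using len assms(5) vs_perm branch_time_nonneg[OF assms(3,1)]
    by (intro Max_eq_postal_time[symmetric, of vs ?f \<rho>, unfolded len])
       (auto simp: permutations_of_set_def)
  also have "\<dots> \<le> t"
    using assms(5,6) nth by (subst Max_le_iff) auto
  finally show ?thesis .
qed

lemma bcast_mono:
  assumes "finite S" "u \<in> S" "\<forall>e\<in>E. 0 \<le> s1 e" "\<forall>e\<in>E. s1 e \<le> s2 e"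
  shows "bcast E \<rho> s1 S u \<le> bcast E \<rho> s2 S u"
  using assms(1,2)
proof (induction "card S" arbitrary: S u rule: less_induct)
  case less
  have s2_nonneg: "\<forall>e\<in>E. 0 \<le> s2 e" using assms(3,4) by force
  obtain vs where vs: "vs \<in> permutations_of_set (nbrs E S u)"
    "bcast E \<rho> s2 S u = postal_time \<rho> (branch_time E \<rho> s2 S u) vs"
    using bcast_eq_postal_time[OF less.prems s2_nonneg] .
  have "branch_time E \<rho> s1 S u v \<le> branch_time E \<rho> s2 S u v" if "v \<in> nbrs E S u" for v
  proof -
    have "bcast E \<rho> s1 (comp E S u v) v \<le> bcast E \<rho> s2 (comp E S u v) v"
      using card_comp_nbr_less[OF less.prems that] less.prems
      by (intro less.hyps) (auto simp: finite_comp comp_self)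
    moreover have "s1 {u, v} \<le> s2 {u, v}" using that assms(4) by (simp add: nbrs_def)
    ultimately show ?thesis by (simp add: branch_time_def)
  qed
  then have "postal_time \<rho> (branch_time E \<rho> s1 S u) vs \<le> postal_time \<rho> (branch_time E \<rho> s2 S u) vs"
    using vs(1) by (intro postal_time_mono) (simp add: permutations_of_set_def)
  then show ?case
    using bcast_le_postal_time[OF less.prems assms(3) vs(1)] vs(2) by simp
qed

lemma bcast_cong_edges:
  assumes "finite S" "u \<in> S" "\<forall>e\<in>E. 0 \<le> s1 e" "\<forall>e\<in>E. 0 \<le> s2 e"
    and "\<forall>e\<in>edges_of E S. s1 e = s2 e"
  shows "bcast E \<rho> s1 S u = bcast E \<rho> s2 S u"
  using assms(1,2,5)
proof (induction "card S" arbitrary: S u rule: less_induct)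
  case less
  have "branch_time E \<rho> s1 S u v = branch_time E \<rho> s2 S u v" if "v \<in> nbrs E S u" for v
  proof -
    have "comp E S u v \<subseteq> S" using that by (intro comp_subset_of_mem) (simp add: nbrs_def)
    then have "bcast E \<rho> s1 (comp E S u v) v = bcast E \<rho> s2 (comp E S u v) v"
      using card_comp_nbr_less[OF less.prems(1,2) that] less.prems
      by (intro less.hyps) (auto simp: edges_of_def finite_comp comp_self)
    moreover have "s1 {u, v} = s2 {u, v}"
      using that less.prems by (simp add: nbrs_def edges_of_def)
    ultimately show ?thesis by (simp add: branch_time_def)
  qed
  then have "postal_time \<rho> (branch_time E \<rho> s1 S u) vs = postal_time \<rho> (branch_time E \<rho> s2 S u) vs"
    if "vs \<in> permutations_of_set (nbrs E S u)" for vs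
    using that by (intro postal_time_cong) (simp add: permutations_of_set_def)
  then show ?case
    using less.prems(1,2) assms(3,4) by (simp add: bcast_unfold cong: image_cong)
qed

end

lemma tree_edge:
  assumes "is_tree V E" "{p, q} \<in> E"
  shows "p \<in> V" "q \<in> V" "p \<noteq> q"
proof -
  obtain a b where "a \<in> V" "b \<in> V" "a \<noteq> b" "{p, q} = {a, b}"
    using assms unfolding is_tree_def by blast
  then show "p \<in> V" "q \<in> V" "p \<noteq> q" by (auto simp: doubleton_eq_iff)
qed

lemma tree_no_loops: "is_tree V E \<Longrightarrow> {a} \<notin> E"
  using tree_edge(3)[of V E a a] by auto

lemma rtrancl_adjrel_avoid: "(adjrel E (V - {p}))\<^sup>* \<subseteq> (adjrel (E - {{p, q}}) V)\<^sup>*"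
proof (rule rtrancl_mono, rule subsetI)
  fix x assume "x \<in> adjrel E (V - {p})"
  then obtain a b where "x = (a, b)" "a \<in> V" "b \<in> V" "a \<noteq> p" "b \<noteq> p" "{a, b} \<in> E"
    by (auto simp: adjrel_def)
  moreover from this have "{a, b} \<noteq> {p, q}" by (auto simp: doubleton_eq_iff)
  ultimately show "x \<in> adjrel (E - {{p, q}}) V" by (simp add: adjrel_def)
qed

lemma comp_extend:
  assumes "y \<in> comp E V p q" "q \<in> V" "p \<noteq> q" "{y, z} \<in> E" "z \<in> V" "z \<noteq> p"
  shows "z \<in> comp E V p q"
proof -
  have "y \<in> V" "y \<noteq> p"
    using assms(1) comp_subset_of_mem[OF assms(2)] center_notin_comp[OF assms(3)] by auto
  then have "(y, z) \<in> adjrel E (V - {p})" using assms(4-6) by (simp add: adjrel_def)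
  then show ?thesis by (rule comp_step[OF assms(1)])
qed

lemma comp_disjoint_across_edge:
  assumes t: "is_tree V E" and e: "{p, q} \<in> E"
  shows "comp E V p q \<inter> comp E V q p = {}"
proof (rule ccontr)
  let ?r = "adjrel (E - {{p, q}}) V"
  assume "comp E V p q \<inter> comp E V q p \<noteq> {}"
  then obtain z where "(q, z) \<in> (adjrel E (V - {p}))\<^sup>*" "(p, z) \<in> (adjrel E (V - {q}))\<^sup>*"
    by (auto simp: Defs.comp_def)
  then have "(q, z) \<in> ?r\<^sup>*" "(p, z) \<in> ?r\<^sup>*"
    using rtrancl_adjrel_avoid[of E V p q] rtrancl_adjrel_avoid[of E V q p]
    by (auto simp: insert_commute)
  then have "(p, q) \<in> ?r\<^sup>*"
    by (meson rtrancl_trans symD sym_adjrel sym_rtrancl)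
  then show False using t e unfolding is_tree_def by blast
qed

lemma comp_cover_across_edge:
  assumes t: "is_tree V E" and e: "{p, q} \<in> E" and z: "z \<in> V"
  shows "z \<in> comp E V p q \<or> z \<in> comp E V q p"
proof -
  have pq: "p \<in> V" "q \<in> V" "p \<noteq> q" using tree_edge[OF t e] by auto
  have "(q, z) \<in> (adjrel E V)\<^sup>*" using t pq(2) z unfolding is_tree_def by blast
  then show ?thesis
  proof (induction rule: rtrancl_induct)
    case (step y z)
    then have "{y, z} \<in> E" "z \<in> V" by (auto simp: adjrel_def)
    then show ?case
      using step.IH comp_extend[of y E V p q z] comp_extend[of y E V q p z] pq
        comp_self[of p E V q] comp_self[of q E V p]
      by (cases "z = p \<or> z = q") auto
  qed (use comp_self in fast)
qed

lemma comp_complement: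
  assumes t: "is_tree V E" and e: "{p, q} \<in> E"
  shows "comp E V p q = V - comp E V q p"
  using comp_disjoint_across_edge[OF assms] comp_cover_across_edge[OF assms]
    comp_subset_of_mem[OF tree_edge(2)[OF assms], of E p] by blast

lemma nbr_notin_comp:
  assumes t: "is_tree V E" and "{y, v} \<in> E" "{y, w} \<in> E" "v \<noteq> w"
  shows "w \<notin> comp E V y v"
proof
  assume "w \<in> comp E V y v"
  then have "(v, w) \<in> (adjrel (E - {{y, v}}) V)\<^sup>*"
    using rtrancl_adjrel_avoid[of E V y v] by (auto simp: Defs.comp_def)
  moreover have "(w, y) \<in> adjrel (E - {{y, v}}) V"
    using assms tree_edge[OF t assms(3)] by (auto simp: adjrel_def doubleton_eq_iff insert_commute)
  ultimately have "(y, v) \<in> (adjrel (E - {{y, v}}) V)\<^sup>*"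
    by (meson rtrancl_into_rtrancl symD sym_adjrel sym_rtrancl)
  then show False using t assms(2) unfolding is_tree_def by blast
qed

lemma comp_comp:
  assumes t: "is_tree V E" and "{v, v'} \<in> E" "{w, v} \<in> E" "w \<noteq> v'"
  shows "comp E (comp E V w v) v v' = comp E V v v'"
proof (rule comp_restrict)
  have vV: "v \<in> V" "v' \<in> V" using tree_edge[OF t assms(2)] by auto
  show "comp E V w v \<subseteq> V" by (rule comp_subset_of_mem[OF vV(1)])
  have "w \<notin> comp E V v v'"
    using assms by (intro nbr_notin_comp) (auto simp: insert_commute)
  then have "comp E V v v' \<inter> comp E V v w = {}"
    using comp_eq_of_mem[of _ E V v v'] comp_eq_of_mem[of _ E V v w] comp_self[of w E V v] by blast
  then show "comp E V v v' \<subseteq> comp E V w v"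
    using comp_complement[OF t assms(3)] comp_subset_of_mem[OF vV(2)] by blast
qed

lemma nbrs_comp:
  assumes t: "is_tree V E" and "{w, v} \<in> E"
  shows "nbrs E (comp E V w v) v = nbrs E V v - {w}"
proof
  have wv: "w \<in> V" "v \<in> V" "w \<noteq> v" using tree_edge[OF t assms(2)] by auto
  show "nbrs E (comp E V w v) v \<subseteq> nbrs E V v - {w}"
    using comp_subset_of_mem[OF wv(2)] center_notin_comp[OF wv(3)] by (auto simp: nbrs_def)
  show "nbrs E V v - {w} \<subseteq> nbrs E (comp E V w v) v"
  proof
    fix z assume z: "z \<in> nbrs E V v - {w}"
    then have "(v, z) \<in> adjrel E (V - {w})" using wv by (auto simp: nbrs_def adjrel_def)
    then have "z \<in> comp E V w v" by (rule comp_step[OF comp_self])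
    then show "z \<in> nbrs E (comp E V w v) v" using z by (simp add: nbrs_def)
  qed
qed

lemma edge_within_or_across_comp:
  assumes t: "is_tree V E" and "{y, \<mu>} \<in> E" "e \<in> E"
  shows "e \<subseteq> comp E V y \<mu> \<or> e \<subseteq> V - comp E V y \<mu> \<or> e = {y, \<mu>}"
proof -
  have crossing: "{a, b} = {y, \<mu>}"
    if "{a, b} \<in> E" "a \<in> comp E V y \<mu>" "b \<notin> comp E V y \<mu>" for a b
  proof (cases "b = y")
    case True
    then have "a = \<mu>"
      using that nbr_notin_comp[OF t assms(2), of a] by (auto simp: insert_commute)
    then show ?thesis using True by (simp add: insert_commute)
  next
    case False
    have "y \<notin> comp E V y \<mu>" using center_notin_comp tree_edge(3)[OF t assms(2)] by metis
    then have "(a, b) \<in> adjrel E (V - {y})"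
      using that False tree_edge[OF t that(1)] by (auto simp: adjrel_def)
    then show ?thesis using comp_step[OF that(2)] that(3) by blast
  qed
  obtain a b where "e = {a, b}" "a \<in> V" "b \<in> V"
    using t assms(3) unfolding is_tree_def by blast
  then show ?thesis
    using crossing[of a b] crossing[of b a] assms(3) by (auto simp: insert_commute)
qed

locale postal_tree = postal_model +
  fixes V :: "'a set"
  assumes tree: "is_tree V E"
begin

lemma finite_V: "finite V"
  using tree unfolding is_tree_def by blast

lemma branch_time_comp:
  assumes "{q, p} \<in> E" "z \<in> nbrs E V p - {q}"
  shows "branch_time E \<rho> s (comp E V q p) p z = branch_time E \<rho> s V p z"
proof -
  have "comp E (comp E V q p) p z = comp E V p z"
    using assms by (intro comp_comp[OF tree _ assms(1)]) (auto simp: nbrs_def)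
  then show ?thesis by (simp add: branch_time_def)
qed

text \<open>Call \<open>q\<close> first, then the other neighbours in an order optimal for the subtree
  without \<open>q\<close>.\<close>

lemma bcast_le_first_call:
  assumes s: "\<forall>e\<in>E. 0 \<le> s e" and e: "{p, q} \<in> E"
  shows "bcast E \<rho> s V p \<le> \<rho> + max (branch_time E \<rho> s V p q) (bcast E \<rho> s (comp E V q p) p)"
proof -
  have p: "p \<in> V" "p \<in> comp E V q p" using tree_edge[OF tree e] comp_self by fast+
  have q: "q \<in> nbrs E V p" using e tree_edge[OF tree e] by (simp add: nbrs_def)
  have N: "nbrs E (comp E V q p) p = nbrs E V p - {q}"
    using nbrs_comp[OF tree, of q p] e by (simp add: insert_commute)
  obtain vs where vs: "vs \<in> permutations_of_set (nbrs E V p - {q})"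
    "bcast E \<rho> s (comp E V q p) p = postal_time \<rho> (branch_time E \<rho> s (comp E V q p) p) vs"
    using bcast_eq_postal_time[OF finite_comp[OF finite_V] p(2) s] unfolding N .
  have "postal_time \<rho> (branch_time E \<rho> s (comp E V q p) p) vs = postal_time \<rho> (branch_time E \<rho> s V p) vs"
    using vs(1) branch_time_comp[of q p] e
    by (intro postal_time_cong) (auto simp: permutations_of_set_def insert_commute)
  moreover have "q # vs \<in> permutations_of_set (nbrs E V p)"
    using vs(1) q by (auto simp: permutations_of_set_def)
  ultimately show ?thesis
    using bcast_le_postal_time[OF finite_V p(1) s] vs(2) by fastforce
qed

text \<open>Drop \<open>p\<close> from an optimal calling order of \<open>q\<close> in the whole tree.\<close>

lemma bcast_comp_le:
  assumes s: "\<forall>e\<in>E. 0 \<le> s e" and e: "{p, q} \<in> E"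
  shows "bcast E \<rho> s (comp E V p q) q \<le> bcast E \<rho> s V q"
proof -
  have q: "q \<in> V" "q \<in> comp E V p q" using tree_edge[OF tree e] comp_self by fast+
  obtain vs where vs: "vs \<in> permutations_of_set (nbrs E V q)"
    "bcast E \<rho> s V q = postal_time \<rho> (branch_time E \<rho> s V q) vs"
    using bcast_eq_postal_time[OF finite_V q(1) s] .
  let ?vs = "filter (\<lambda>z. z \<noteq> p) vs"
  have vs': "?vs \<in> permutations_of_set (nbrs E (comp E V p q) q)"
    using vs(1) nbrs_comp[OF tree e] by (auto simp: permutations_of_set_def)
  have "bcast E \<rho> s (comp E V p q) q \<le> postal_time \<rho> (branch_time E \<rho> s (comp E V p q) q) ?vs"
    by (rule bcast_le_postal_time[OF finite_comp[OF finite_V] q(2) s vs'])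
  also have "\<dots> = postal_time \<rho> (branch_time E \<rho> s V q) ?vs"
    using vs(1) branch_time_comp[OF e]
    by (intro postal_time_cong) (auto simp: permutations_of_set_def)
  also have "\<dots> \<le> bcast E \<rho> s V q"
    using postal_time_filter_le[OF rho_nonneg] vs(2) by simp
  finally show ?thesis .
qed

lemma bcast_le_edge:
  assumes s: "\<forall>e\<in>E. 0 \<le> s e" and e: "{p, q} \<in> E"
  shows "bcast E \<rho> s V p \<le> \<rho> + s {p, q} + bcast E \<rho> s V q"
proof -
  have e': "{q, p} \<in> E" using e by (simp add: insert_commute)
  have "p \<in> nbrs E V q" using e' tree_edge[OF tree e] by (simp add: nbrs_def)
  then have "\<rho> + branch_time E \<rho> s V q p \<le> bcast E \<rho> s V q"
    using bcast_ge_branch_time[OF finite_V _ s] tree_edge[OF tree e] by blast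
  moreover have "0 \<le> s {p, q}" using s e by blast
  ultimately show ?thesis
    using bcast_le_first_call[OF s e] bcast_comp_le[OF s e] rho_nonneg
    by (auto simp: branch_time_def insert_commute max_def split: if_splits)
qed

end

lemma is_path_rev:
  assumes "is_path E p a b"
  shows "is_path E (rev p) b a"
proof -
  have "{rev p ! i, rev p ! Suc i} \<in> E" if "Suc i < length p" for i
  proof -
    define k where "k = length p - Suc (Suc i)"
    have "Suc k < length p" "rev p ! i = p ! Suc k" "rev p ! Suc i = p ! k"
      using that by (auto simp: k_def rev_nth Suc_diff_Suc)
    then show ?thesis using assms by (auto simp: is_path_def insert_commute)
  qed
  then show ?thesis using assms by (simp add: is_path_def hd_rev last_rev)
qed

lemma path_edges_sym: "e \<in> path_edges E a b \<Longrightarrow> e \<in> path_edges E b a"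
proof -
  assume "e \<in> path_edges E a b"
  then obtain p i where "e = {p ! i, p ! Suc i}" "is_path E p a b" "Suc i < length p"
    unfolding path_edges_def by blast
  moreover define k where "k = length p - Suc (Suc i)"
  ultimately have "e = {rev p ! k, rev p ! Suc k}" "is_path E (rev p) b a" "Suc k < length (rev p)"
    by (auto simp: rev_nth Suc_diff_Suc insert_commute is_path_rev)
  then show ?thesis unfolding path_edges_def by blast
qed

lemma path_from_first_edge:
  assumes "{y, \<mu>} \<in> path_edges E y x"
  obtains p where "is_path E p y x" "2 \<le> length p" "p ! 1 = \<mu>"
proof -
  obtain p i where p: "{y, \<mu>} = {p ! i, p ! Suc i}" "is_path E p y x" "Suc i < length p"
    using assms unfolding path_edges_def by blast
  then have "distinct p" "p ! 0 = y" by (auto simp: is_path_def hd_conv_nth)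
  then have first: "j = 0" if "p ! j = y" "j < length p" for j
    using that nth_eq_iff_index_eq[of p j 0] p(3) by fastforce
  have "y = p ! i \<and> \<mu> = p ! Suc i \<or> y = p ! Suc i \<and> \<mu> = p ! i"
    using p(1) unfolding doubleton_eq_iff .
  then have "i = 0" "p ! 1 = \<mu>"
    using first[of i] first[of "Suc i"] p(3) by auto
  then show ?thesis using that p(2,3) by simp
qed

lemma path_beyond_first_step:
  assumes t: "is_tree V E" and p: "is_path E p y x" "2 \<le> length p"
  shows "x \<in> comp E V y (p ! 1)"
proof -
  have p_props: "distinct p" "p ! 0 = y" "last p = x" "\<And>j. Suc j < length p \<Longrightarrow> {p ! j, p ! Suc j} \<in> E"
    using p(1) by (auto simp: is_path_def hd_conv_nth)
  have not_y: "p ! j \<noteq> y" if "0 < j" "j < length p" for j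
    using that p_props(1,2) nth_eq_iff_index_eq[of p j 0] by fastforce
  have "1 \<le> j \<Longrightarrow> j < length p \<Longrightarrow> p ! j \<in> comp E V y (p ! 1)" for j
  proof (induction j)
    case (Suc j)
    show ?case
    proof (cases "j = 0")
      case False
      have e: "{p ! j, p ! Suc j} \<in> E" using Suc.prems p_props(4) by simp
      then have "(p ! j, p ! Suc j) \<in> adjrel E (V - {y})"
        using tree_edge[OF t e] not_y False Suc.prems by (simp add: adjrel_def)
      then show ?thesis using comp_step Suc False by simp
    qed (simp add: comp_self)
  qed simp
  then show ?thesis
    using p p_props(3) by (auto simp: last_conv_nth is_path_def)
qed

lemma path_edges_nth:
  "is_path E p y x \<Longrightarrow> Suc j < length p \<Longrightarrow> {p ! j, p ! Suc j} \<in> path_edges E x y"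
  using path_edges_sym[of _ E y x] unfolding path_edges_def by blast

lemma Tsub_Tbar_path:
  assumes t: "is_tree V E" and p: "is_path E p y x" "2 \<le> length p"
  shows "Tsub E V y x = comp E V y (p ! 1)" "Tbar E V y x = comp E V (p ! 1) y"
proof -
  show Tsub: "Tsub E V y x = comp E V y (p ! 1)"
    using path_beyond_first_step[OF t p] comp_eq_of_mem by (metis Tsub_def)
  have "{p ! 1, y} \<in> E"
    using p by (auto simp: is_path_def hd_conv_nth insert_commute)
  then show "Tbar E V y x = comp E V (p ! 1) y"
    using comp_complement[OF t] Tsub by (simp add: Tbar_def)
qed

lemma branch_time_Tbar:
  "is_tree V E \<Longrightarrow> {y, v} \<in> E \<Longrightarrow> branch_time E \<rho> s V y v = s {y, v} + bcast E \<rho> s (Tbar E V v y) v"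
  by (simp add: branch_time_def Tbar_def Tsub_def comp_complement)

text \<open>For a path \<open>p\<close> the part of the tree lying behind \<open>p ! j\<close>, as seen from \<open>p ! (j + 1)\<close>;
  at the last vertex of \<open>p\<close> it is the whole tree.\<close>

definition rear_subtree :: "'a set set \<Rightarrow> 'a set \<Rightarrow> 'a list \<Rightarrow> nat \<Rightarrow> 'a set" where
  "rear_subtree E V p j = (if Suc j < length p then comp E V (p ! Suc j) (p ! j) else V)"

lemma rear_subtree_last: "rear_subtree E V p (length p - 1) = V"
proof -
  have "\<not> Suc (length p - 1) < length p" by simp
  then show ?thesis unfolding rear_subtree_def by (simp only: if_False)
qed

context postal_tree
begin

lemma rear_subtree_step:
  assumes p: "is_path E p y x" "Suc j < length p"
  shows "p ! j \<in> nbrs E (rear_subtree E V p (Suc j)) (p ! Suc j)"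
    and "p ! Suc j \<in> rear_subtree E V p (Suc j)"
    and "comp E (rear_subtree E V p (Suc j)) (p ! Suc j) (p ! j) = rear_subtree E V p j"
proof -
  have e: "{p ! Suc j, p ! j} \<in> E"
    using p by (auto simp: is_path_def insert_commute)
  have w: "p ! j \<in> nbrs E V (p ! Suc j)"
    using e tree_edge[OF tree e] by (simp add: nbrs_def)
  have "p ! j \<in> nbrs E (rear_subtree E V p (Suc j)) (p ! Suc j) \<and> p ! Suc j \<in> rear_subtree E V p (Suc j)
    \<and> comp E (rear_subtree E V p (Suc j)) (p ! Suc j) (p ! j) = comp E V (p ! Suc j) (p ! j)"
  proof (cases "Suc (Suc j) < length p")
    case True
    have e': "{p ! Suc (Suc j), p ! Suc j} \<in> E"
      using p True by (auto simp: is_path_def insert_commute)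
    have "p ! Suc (Suc j) \<noteq> p ! j"
      using p True nth_eq_iff_index_eq[of p "Suc (Suc j)" j] by (auto simp: is_path_def)
    then show ?thesis
      using True w nbrs_comp[OF tree e'] comp_comp[OF tree e e'] comp_self
      by (simp add: rear_subtree_def)
  qed (use w tree_edge[OF tree e] in \<open>simp add: rear_subtree_def\<close>)
  then show "p ! j \<in> nbrs E (rear_subtree E V p (Suc j)) (p ! Suc j)"
    and "p ! Suc j \<in> rear_subtree E V p (Suc j)"
    and "comp E (rear_subtree E V p (Suc j)) (p ! Suc j) (p ! j) = rear_subtree E V p j"
    using p(2) by (simp_all add: rear_subtree_def)
qed

lemma finite_rear_subtree: "finite (rear_subtree E V p j)"
  by (simp add: rear_subtree_def finite_V finite_comp)

text \<open>Each step along the path raises the \<open>\<alpha>\<close>-time of the rear subtree by at least \<open>\<rho>\<close> plus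
  the edge weight, and the \<open>s\<close>-time of the whole tree by at most as much.\<close>

lemma bcast_gap_along_path:
  assumes s: "\<forall>e\<in>E. 0 \<le> s e" and \<alpha>: "\<forall>e\<in>E. 0 \<le> \<alpha> e"
    and p: "is_path E p y x" "\<forall>j. Suc j < length p \<longrightarrow> \<alpha> {p ! j, p ! Suc j} = s {p ! j, p ! Suc j}"
    and "i \<le> j" "j < length p"
  shows "bcast E \<rho> \<alpha> (rear_subtree E V p i) (p ! i) - bcast E \<rho> s V (p ! i)
      \<le> bcast E \<rho> \<alpha> (rear_subtree E V p j) (p ! j) - bcast E \<rho> s V (p ! j)"
  using assms(5,6)
proof (induction j rule: dec_induct)
  case (step j)
  have e: "{p ! Suc j, p ! j} \<in> E"
    using p step by (auto simp: is_path_def insert_commute)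
  have "\<rho> + branch_time E \<rho> \<alpha> (rear_subtree E V p (Suc j)) (p ! Suc j) (p ! j)
      \<le> bcast E \<rho> \<alpha> (rear_subtree E V p (Suc j)) (p ! Suc j)"
    using p step rear_subtree_step by (intro bcast_ge_branch_time[OF finite_rear_subtree _ \<alpha>]) auto
  moreover have "branch_time E \<rho> \<alpha> (rear_subtree E V p (Suc j)) (p ! Suc j) (p ! j)
      = s {p ! Suc j, p ! j} + bcast E \<rho> \<alpha> (rear_subtree E V p j) (p ! j)"
    using p step rear_subtree_step(3)[OF p(1)] by (simp add: branch_time_def insert_commute)
  moreover have "bcast E \<rho> s V (p ! Suc j) \<le> \<rho> + s {p ! Suc j, p ! j} + bcast E \<rho> s V (p ! j)"
    by (rule bcast_le_edge[OF s e])
  ultimately show ?case using step.IH step by simp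
qed simp

lemma bcast_ge_sorted_branches:
  assumes s: "\<forall>e\<in>E. 0 \<le> s e" and e: "{y, \<mu>} \<in> E"
    and u: "bij_betw u {1..h} (nbrs E (comp E V \<mu> y) y)"
    and a: "\<forall>k\<in>{1..h}. a k = branch_time E \<rho> s V y (u k)"
    and sorted: "\<forall>i j. 1 \<le> i \<longrightarrow> i \<le> j \<longrightarrow> j \<le> h \<longrightarrow> a j \<le> a i"
    and \<tau>: "\<tau> \<in> {1..h}" "\<forall>k\<in>{1..h}. real k * \<rho> + a k \<le> real \<tau> * \<rho> + a \<tau>"
    and \<mu>: "a \<tau> \<le> branch_time E \<rho> s V y \<mu>"
  shows "\<rho> + max (branch_time E \<rho> s V y \<mu>) (bcast E \<rho> s (comp E V \<mu> y) y) \<le> bcast E \<rho> s V y"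
proof -
  have y: "y \<in> V" "y \<in> comp E V \<mu> y" using tree_edge[OF tree e] comp_self by fast+
  have \<mu>_nbr: "\<mu> \<in> nbrs E V y" using e tree_edge[OF tree e] by (simp add: nbrs_def)
  have u_nbr: "u k \<in> nbrs E V y - {\<mu>}" if "k \<in> {1..h}" for k
    using bij_betw_apply[OF u that] nbrs_comp[OF tree, of \<mu> y] e by (simp add: insert_commute)
  have "bcast E \<rho> s (comp E V \<mu> y) y \<le> real \<tau> * \<rho> + a \<tau>"
  proof (rule bcast_le_of_enumeration[OF finite_comp[OF finite_V] y(2) s u])
    show "1 \<le> h" using \<tau>(1) by simp
    show "\<forall>k\<in>{1..h}. real k * \<rho> + branch_time E \<rho> s (comp E V \<mu> y) y (u k) \<le> real \<tau> * \<rho> + a \<tau>"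
      using \<tau>(2) a u_nbr branch_time_comp[of \<mu> y] e by (simp add: insert_commute)
  qed
  moreover have "\<rho> + branch_time E \<rho> s V y \<mu> \<le> bcast E \<rho> s V y"
    by (rule bcast_ge_branch_time[OF finite_V y(1) s \<mu>_nbr])
  moreover have "real (Suc \<tau>) * \<rho> + a \<tau> \<le> bcast E \<rho> s V y"
  proof (rule bcast_ge_card[OF finite_V y(1) s])
    have sub: "{1..\<tau>} \<subseteq> {1..h}" using \<tau>(1) by auto
    then have "u ` {1..\<tau>} \<subseteq> nbrs E V y - {\<mu>}" using u_nbr by blast
    then show "insert \<mu> (u ` {1..\<tau>}) \<subseteq> nbrs E V y" using \<mu>_nbr by blast
    have "card (u ` {1..\<tau>}) = \<tau>"
      using card_image[OF inj_on_subset[OF bij_betw_imp_inj_on[OF u] sub]] by simp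
    then show "card (insert \<mu> (u ` {1..\<tau>})) = Suc \<tau>"
      using \<open>u ` {1..\<tau>} \<subseteq> _\<close> by (subst card_insert_disjoint) auto
    have "a \<tau> \<le> branch_time E \<rho> s V y (u k)" if "k \<in> {1..\<tau>}" for k
      using sorted[rule_format, of k \<tau>] a sub that \<tau>(1) by auto
    then show "\<forall>w\<in>insert \<mu> (u ` {1..\<tau>}). a \<tau> \<le> branch_time E \<rho> s V y w"
      using \<mu> by blast
  qed
  ultimately show ?thesis by (simp add: algebra_simps)
qed

lemma bcast_gap_first_edge:
  assumes s: "\<forall>e\<in>E. 0 \<le> s e" and \<alpha>: "\<forall>e\<in>E. 0 \<le> \<alpha> e"
    and p: "is_path E p y x" "2 \<le> length p" and agree: "\<alpha> {y, p ! 1} = s {y, p ! 1}"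
  shows "bcast E \<rho> \<alpha> (comp E V (p ! 1) y) y
      - max (bcast E \<rho> s (comp E V (p ! 1) y) y) (branch_time E \<rho> s V y (p ! 1))
    \<le> bcast E \<rho> \<alpha> (rear_subtree E V p 1) (p ! 1) - bcast E \<rho> s V (p ! 1)"
proof -
  define \<mu> where "\<mu> = p ! 1"
  have y0: "p ! 0 = y"
    using p by (auto simp: is_path_def hd_conv_nth)
  have e': "{\<mu>, y} \<in> E"
    using p y0 by (auto simp: is_path_def \<mu>_def insert_commute)
  then have s_e: "0 \<le> s {y, \<mu>}" using s by (simp add: insert_commute)
  have "bcast E \<rho> s (comp E V y \<mu>) \<mu> \<le> branch_time E \<rho> s V y \<mu>"
    using s_e by (simp add: branch_time_def)
  moreover have "bcast E \<rho> s V \<mu>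
      \<le> \<rho> + max (s {y, \<mu>} + bcast E \<rho> s (comp E V \<mu> y) y) (bcast E \<rho> s (comp E V y \<mu>) \<mu>)"
    using bcast_le_first_call[OF s e'] by (simp add: branch_time_def insert_commute)
  ultimately have "bcast E \<rho> s V \<mu>
      \<le> \<rho> + s {y, \<mu>} + max (bcast E \<rho> s (comp E V \<mu> y) y) (branch_time E \<rho> s V y \<mu>)"
    using s_e by (simp add: max_def split: if_splits)
  moreover have "\<rho> + s {y, \<mu>} + bcast E \<rho> \<alpha> (comp E V \<mu> y) y \<le> bcast E \<rho> \<alpha> (rear_subtree E V p 1) \<mu>"
  proof -
    note step = rear_subtree_step[OF p(1), of 0, unfolded One_nat_def[symmetric] y0 \<mu>_def[symmetric]]
    have "comp E (rear_subtree E V p 1) \<mu> y = comp E V \<mu> y"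
      using step(3) p(2) y0 by (simp add: rear_subtree_def \<mu>_def)
    then show ?thesis
      using bcast_ge_branch_time[OF finite_rear_subtree step(2) \<alpha> step(1)] agree p(2)
      by (simp add: branch_time_def insert_commute \<mu>_def)
  qed
  ultimately show ?thesis by (simp add: \<mu>_def)
qed

lemma bcast_gap_path_end:
  assumes s: "\<forall>e\<in>E. 0 \<le> s e" and \<alpha>: "\<forall>e\<in>E. 0 \<le> \<alpha> e"
    and p: "is_path E p y x" "2 \<le> length p"
    and path_agree: "\<forall>j. Suc j < length p \<longrightarrow> \<alpha> {p ! j, p ! Suc j} = s {p ! j, p ! Suc j}"
  shows "bcast E \<rho> \<alpha> (comp E V (p ! 1) y) y
      - max (bcast E \<rho> s (comp E V (p ! 1) y) y) (branch_time E \<rho> s V y (p ! 1))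
    \<le> bcast E \<rho> \<alpha> V x - bcast E \<rho> s V x"
proof -
  have "p ! 0 = y" "p ! (length p - 1) = x"
    using p by (auto simp: is_path_def hd_conv_nth last_conv_nth)
  then have "\<alpha> {y, p ! 1} = s {y, p ! 1}"
    using path_agree[rule_format, of 0] p(2) by simp
  moreover have "1 \<le> length p - 1" "length p - 1 < length p" using p(2) by auto
  ultimately show ?thesis
    using bcast_gap_first_edge[OF s \<alpha> p] bcast_gap_along_path[OF s \<alpha> p(1) path_agree, of 1 "length p - 1"]
      \<open>p ! (length p - 1) = x\<close> rear_subtree_last[of E V p]
    by simp
qed

lemma bcast_increase_le_along_path:
  assumes s: "\<forall>e\<in>E. 0 \<le> s e" and \<alpha>: "\<forall>e\<in>E. 0 \<le> \<alpha> e" and s_le: "\<forall>e\<in>E. s e \<le> \<alpha> e"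
    and p: "is_path E p y x" "2 \<le> length p"
    and path_agree: "\<forall>j. Suc j < length p \<longrightarrow> \<alpha> {p ! j, p ! Suc j} = s {p ! j, p ! Suc j}"
    and side_agree: "\<forall>e\<in>edges_of E (comp E V y (p ! 1)). \<alpha> e = s e"
    and lower: "\<rho> + max (branch_time E \<rho> s V y (p ! 1)) (bcast E \<rho> s (comp E V (p ! 1) y) y)
      \<le> bcast E \<rho> s V y"
  shows "bcast E \<rho> \<alpha> V y - bcast E \<rho> s V y \<le> bcast E \<rho> \<alpha> V x - bcast E \<rho> s V x"
proof -
  define \<mu> where "\<mu> = p ! 1"
  have e: "{y, \<mu>} \<in> E"
    using p by (auto simp: is_path_def hd_conv_nth \<mu>_def)
  have "\<alpha> {y, \<mu>} = s {y, \<mu>}"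
    using path_agree[rule_format, of 0] p by (auto simp: is_path_def hd_conv_nth \<mu>_def)
  moreover have "bcast E \<rho> \<alpha> (comp E V y \<mu>) \<mu> = bcast E \<rho> s (comp E V y \<mu>) \<mu>"
    using side_agree by (intro bcast_cong_edges[OF finite_comp[OF finite_V] comp_self \<alpha> s]) (simp add: \<mu>_def)
  ultimately have "branch_time E \<rho> \<alpha> V y \<mu> = branch_time E \<rho> s V y \<mu>"
    by (simp add: branch_time_def)
  then have "bcast E \<rho> \<alpha> V y \<le> \<rho> + max (branch_time E \<rho> s V y \<mu>) (bcast E \<rho> \<alpha> (comp E V \<mu> y) y)"
    using bcast_le_first_call[OF \<alpha> e] by simp
  moreover have "x \<in> V"
    using path_beyond_first_step[OF tree p] comp_subset_of_mem tree_edge(2)[OF tree e] by (fastforce simp: \<mu>_def)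
  then have "bcast E \<rho> s V x \<le> bcast E \<rho> \<alpha> V x"
    by (rule bcast_mono[OF finite_V _ s s_le])
  ultimately show ?thesis
    using bcast_gap_path_end[OF s \<alpha> p path_agree] lower
    by (simp add: \<mu>_def max_def split: if_splits)
qed

lemma bdd_above_regrets:
  assumes "\<forall>e\<in>E. 0 \<le> wl e \<and> wl e \<le> wu e" "x \<in> V"
  shows "bdd_above {regret E \<rho> V s x z | s z. z \<in> V \<and> scenario E wl wu s}"
proof (rule bdd_aboveI)
  fix r assume "r \<in> {regret E \<rho> V s x z | s z. z \<in> V \<and> scenario E wl wu s}"
  then obtain s z where r: "r = regret E \<rho> V s x z" and s: "scenario E wl wu s"
    by blast
  have "\<forall>e\<in>E. 0 \<le> s e" "\<forall>e\<in>E. s e \<le> wu e"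
    using s assms(1) unfolding scenario_def by force+
  then show "r \<le> bcast E \<rho> wu V x"
    using bcast_mono[OF finite_V assms(2)] bcast_nonneg[OF _ finite_V, of s z] r
    by (fastforce simp: regret_def)
qed

lemma worst_case_if_regret_ge:
  assumes intervals: "\<forall>e\<in>E. 0 \<le> wl e \<and> wl e \<le> wu e" and x: "x \<in> V"
    and wc: "worst_case E \<rho> V wl wu s x" and y: "in_B E \<rho> V s y"
    and \<alpha>: "scenario E wl wu \<alpha>" and le: "regret E \<rho> V s x y \<le> regret E \<rho> V \<alpha> x y"
  shows "worst_case E \<rho> V wl wu \<alpha> x"
proof -
  obtain y\<^sub>0 where "y\<^sub>0 \<in> V" "max_r E \<rho> V wl wu x = regret E \<rho> V s x y\<^sub>0"
    using wc unfolding worst_case_def by blast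
  then have "max_r E \<rho> V wl wu x \<le> regret E \<rho> V s x y"
    using y unfolding in_B_def regret_def by auto
  moreover have "regret E \<rho> V \<alpha> x y \<le> max_r E \<rho> V wl wu x"
    unfolding max_r_def using y \<alpha>
    by (intro cSup_upper[OF _ bdd_above_regrets[OF intervals x]]) (auto simp: in_B_def)
  ultimately have "max_r E \<rho> V wl wu x = regret E \<rho> V \<alpha> x y"
    using le by linarith
  then show ?thesis
    using y \<alpha> unfolding worst_case_def in_B_def by blast
qed

end

lemma scenario_alpha:
  "\<forall>e\<in>E. wl e \<le> wu e \<Longrightarrow> scenario E wl wu (alpha E V wl wu x y)"
  by (auto simp: scenario_def alpha_def)

lemma scenario_nonneg:
  "\<forall>e\<in>E. 0 \<le> wl e \<Longrightarrow> scenario E wl wu s \<Longrightarrow> \<forall>e\<in>E. 0 \<le> s e"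
  unfolding scenario_def by force

lemma scenario_le_alpha:
  assumes t: "is_tree V E" and s: "scenario E wl wu s"
    and e: "{y, \<mu>} \<in> E" "{y, \<mu>} \<in> path_edges E x y"
    and side: "Tsub E V y x = comp E V y \<mu>"
    and agree: "\<forall>e\<in>edges_of E (Tsub E V y x). s e = alpha E V wl wu x y e"
  shows "\<forall>e\<in>E. s e \<le> alpha E V wl wu x y e"
proof
  fix f assume f: "f \<in> E"
  show "s f \<le> alpha E V wl wu x y f"
  proof (cases "f \<in> path_edges E x y \<union> edges_of E (Tbar E V y x)")
    case True
    then show ?thesis using s f by (simp add: alpha_def scenario_def)
  next
    case False
    then have "f \<subseteq> comp E V y \<mu>"
      using edge_within_or_across_comp[OF t e(1) f] e(2) f side
      by (auto simp: Tbar_def edges_of_def)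
    then show ?thesis using agree f side by (simp add: edges_of_def)
  qed
qed

theorem fact3:
  fixes V :: "'a set" and E :: "'a set set" and \<rho> :: real
    and wl wu s :: "'a set \<Rightarrow> real" and x y \<mu> :: 'a
    and h :: nat and u :: "nat \<Rightarrow> 'a" and a :: "nat \<Rightarrow> real" and \<tau>0 :: nat
  assumes tree: "is_tree V E"
    and rho: "\<rho> > 0"
    and intervals: "\<forall>e\<in>E. 0 \<le> wl e \<and> wl e \<le> wu e"
    and x: "x \<in> V"
    and wc: "worst_case E \<rho> V wl wu s x"
    and y: "y \<in> V" "y \<noteq> x"
    and prime: "prime_bc E \<rho> V s y"
    and agree: "\<forall>e \<in> path_edges E x y \<union> edges_of E (Tsub E V y x). s e = alpha E V wl wu x y e"
    and mu: "\<mu> \<in> nbrs E V y" "{y, \<mu>} \<in> path_edges E y x"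
    and h: "h \<ge> 1"
    and u: "bij_betw u {1..h} (nbrs E (Tbar E V y x) y)"
    and a_def: "\<forall>k\<in>{1..h}. a k = s {y, u k} + bcast E \<rho> s (Tbar E V (u k) y) (u k)"
    and a_sorted: "\<forall>i j. 1 \<le> i \<longrightarrow> i \<le> j \<longrightarrow> j \<le> h \<longrightarrow> a j \<le> a i"
    and tau: "\<tau>0 \<in> {1..h}"
      "\<forall>k\<in>{1..h}. real k * \<rho> + a k \<le> real \<tau>0 * \<rho> + a \<tau>0"
      "\<forall>k\<in>{1..h}. k < \<tau>0 \<longrightarrow> real k * \<rho> + a k < real \<tau>0 * \<rho> + a \<tau>0"
    and cond: "s {y, \<mu>} + bcast E \<rho> s (Tsub E V y x) \<mu> \<ge> a \<tau>0"
  shows "worst_case E \<rho> V wl wu (alpha E V wl wu x y) x"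
proof -
  interpret postal_tree E \<rho> V
    using tree rho tree_no_loops[OF tree] by unfold_locales auto
  define \<alpha> where "\<alpha> = alpha E V wl wu x y"
  obtain p where p: "is_path E p y x" "2 \<le> length p" "p ! 1 = \<mu>"
    using path_from_first_edge[OF mu(2)] .
  note Tsub = Tsub_Tbar_path(1)[OF tree p(1,2), unfolded p(3)]
  note Tbar = Tsub_Tbar_path(2)[OF tree p(1,2), unfolded p(3)]
  have e: "{y, \<mu>} \<in> E" using mu(1) by (simp add: nbrs_def)
  have s: "scenario E wl wu s" using wc by (simp add: worst_case_def)
  have \<alpha>: "scenario E wl wu \<alpha>" unfolding \<alpha>_def by (rule scenario_alpha) (use intervals in blast)
  have nonneg: "\<forall>e\<in>E. 0 \<le> s e" "\<forall>e\<in>E. 0 \<le> \<alpha> e"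
    using scenario_nonneg s \<alpha> intervals by blast+
  have path_agree: "\<forall>j. Suc j < length p \<longrightarrow> \<alpha> {p ! j, p ! Suc j} = s {p ! j, p ! Suc j}"
    using agree path_edges_nth[OF p(1)] by (simp add: \<alpha>_def)
  have "\<forall>k\<in>{1..h}. a k = branch_time E \<rho> s V y (u k)"
    using a_def bij_betw_apply[OF u] branch_time_Tbar[OF tree] by (simp add: nbrs_def)
  then have "\<rho> + max (branch_time E \<rho> s V y \<mu>) (bcast E \<rho> s (comp E V \<mu> y) y) \<le> bcast E \<rho> s V y"
    using bcast_ge_sorted_branches[OF nonneg(1) e u[unfolded Tbar] _ a_sorted tau(1,2)] cond Tsub
    by (simp add: branch_time_def)
  then have "regret E \<rho> V s x y \<le> regret E \<rho> V \<alpha> x y"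
    using bcast_increase_le_along_path[OF nonneg _ p(1,2) path_agree]
      scenario_le_alpha[OF tree s e path_edges_sym[OF mu(2)] Tsub] agree Tsub p(3)
    by (simp add: regret_def \<alpha>_def)
  then show ?thesis
    using worst_case_if_regret_ge[OF intervals x wc _ \<alpha>] prime unfolding prime_bc_def \<alpha>_def by blast
qed

end
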